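(* Let $M$ be a complete Riemannian manifold, $p\in M$, and let $C\in\pi_1(M,p)$ be an irreducible class with a minimal representative geodesic loop $c:[0,L(C)]\to M$ (parametrized by arclength). Then $c$ is a minimizing geodesic on $[0,L(C)/2]$ and on $[L(C)/2,L(C)]$.
   Context: For $C\in\pi_1(M,p)$, $L(C)$ is the infimum of the lengths of loops based at $p$ in the class $C$. A minimal representative geodesic loop of $C$ is a geodesic loop $c\in C$ based at $p$ (possibly not smooth at $p$) whose length equals $L(C)$; such loops exist. A non-trivial element $C\in\pi_1(M,p)$ is irreducible if every decomposition $C=C_1C_2$ with $C_1,C_2\in\pi_1(M,p)$ satisfies $L(C_1)\geq L(C)$ or $L(C_2)\geq L(C)$. *)

theory Defs
  imports "HOL-Analysis.Analysis"
begin

text \<open>Riemannian manifolds are modelled (via the Nash embedding theorem) as embedded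
  smooth submanifolds of a Euclidean space, with the induced Riemannian metric.\<close>

fun Ck_on :: "nat \<Rightarrow> ('a::euclidean_space \<Rightarrow> 'b::euclidean_space) \<Rightarrow> 'a set \<Rightarrow> bool" where
  "Ck_on 0 f U = continuous_on U f"
| "Ck_on (Suc k) f U = ((\<forall>x\<in>U. f differentiable (at x)) \<and>
      (\<forall>v. Ck_on k (\<lambda>x. frechet_derivative f (at x) v) U))"

definition smooth_on :: "('a::euclidean_space \<Rightarrow> 'b::euclidean_space) \<Rightarrow> 'a set \<Rightarrow> bool" where
  "smooth_on f U \<longleftrightarrow> (\<forall>k. Ck_on k f U)"

definition embedded_submanifold :: "'a::euclidean_space set \<Rightarrow> bool" where
  "embedded_submanifold M \<longleftrightarrow>
     (\<forall>x\<in>M. \<exists>U V (\<phi>::'a \<Rightarrow> 'a) \<psi> S. open U \<and> x \<in> U \<and> open V \<and>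
        \<phi> ` U = V \<and> \<psi> ` V = U \<and> (\<forall>y\<in>U. \<psi> (\<phi> y) = y) \<and> (\<forall>z\<in>V. \<phi> (\<psi> z) = z) \<and>
        smooth_on \<phi> U \<and> smooth_on \<psi> V \<and> subspace S \<and> \<phi> ` (U \<inter> M) = V \<inter> S)"

definition tangent_space :: "'a::euclidean_space set \<Rightarrow> 'a \<Rightarrow> 'a set" where
  "tangent_space M x = {v. \<exists>\<gamma> e. e > 0 \<and> (\<forall>t\<in>{-e<..<e}. \<gamma> t \<in> M) \<and> \<gamma> 0 = x \<and>
       (\<gamma> has_vector_derivative v) (at 0)}"

definition curve_length :: "(real \<Rightarrow> 'a::euclidean_space) \<Rightarrow> real \<Rightarrow> real \<Rightarrow> ereal" where
  "curve_length g a b = (SUP nt \<in> {(n, t). t 0 = a \<and> t n = b \<and> (\<forall>i<n. t i \<le> t (Suc i))}.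
      ereal (\<Sum>i<fst nt. dist (g (snd nt (Suc i))) (g (snd nt i))))"

definition idist :: "'a::euclidean_space set \<Rightarrow> 'a \<Rightarrow> 'a \<Rightarrow> ereal" where
  "idist M x y = (INF \<gamma> \<in> {\<gamma>. path \<gamma> \<and> path_image \<gamma> \<subseteq> M \<and> pathstart \<gamma> = x \<and> pathfinish \<gamma> = y}.
      curve_length \<gamma> 0 1)"

definition complete_manifold :: "'a::euclidean_space set \<Rightarrow> bool" where
  "complete_manifold M \<longleftrightarrow>
     (\<forall>\<sigma>. (\<forall>n. \<sigma> n \<in> M) \<and> (\<forall>e>0. \<exists>N. \<forall>m\<ge>N. \<forall>n\<ge>N. idist M (\<sigma> m) (\<sigma> n) < ereal e)
          \<longrightarrow> (\<exists>x\<in>M. \<sigma> \<longlonglongrightarrow> x))"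

text \<open>Geodesic on [a,b]: smooth up to the endpoints (one-sided), with acceleration normal to M.\<close>
definition geodesic_on :: "'a::euclidean_space set \<Rightarrow> (real \<Rightarrow> 'a) \<Rightarrow> real \<Rightarrow> real \<Rightarrow> bool" where
  "geodesic_on M c a b \<longleftrightarrow> a \<le> b \<and> (\<forall>t\<in>{a..b}. c t \<in> M) \<and>
     (\<exists>D::nat \<Rightarrow> real \<Rightarrow> 'a. (\<forall>t\<in>{a..b}. D 0 t = c t) \<and>
        (\<forall>k. continuous_on {a..b} (D k)) \<and>
        (\<forall>k. \<forall>t\<in>{a..b}. (D k has_vector_derivative D (Suc k) t) (at t within {a..b})) \<and>
        (\<forall>t\<in>{a..b}. \<forall>v\<in>tangent_space M (c t). D 2 t \<bullet> v = 0))"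

definition unit_speed_on :: "(real \<Rightarrow> 'a::euclidean_space) \<Rightarrow> real \<Rightarrow> real \<Rightarrow> bool" where
  "unit_speed_on c a b \<longleftrightarrow> (\<forall>t\<in>{a..b}. \<exists>v. (c has_vector_derivative v) (at t within {a..b}) \<and> norm v = 1)"

definition minimizing_geodesic_on :: "'a::euclidean_space set \<Rightarrow> (real \<Rightarrow> 'a) \<Rightarrow> real \<Rightarrow> real \<Rightarrow> bool" where
  "minimizing_geodesic_on M c a b \<longleftrightarrow> geodesic_on M c a b \<and> curve_length c a b = idist M (c a) (c b)"

definition loops :: "'a::euclidean_space set \<Rightarrow> 'a \<Rightarrow> (real \<Rightarrow> 'a) set" where
  "loops M p = {g. path g \<and> path_image g \<subseteq> M \<and> pathstart g = p \<and> pathfinish g = p}"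

definition loop_class :: "'a::euclidean_space set \<Rightarrow> 'a \<Rightarrow> (real \<Rightarrow> 'a) \<Rightarrow> (real \<Rightarrow> 'a) set" where
  "loop_class M p g = {h \<in> loops M p. homotopic_paths M g h}"

definition is_pi1_class :: "'a::euclidean_space set \<Rightarrow> 'a \<Rightarrow> (real \<Rightarrow> 'a) set \<Rightarrow> bool" where
  "is_pi1_class M p C \<longleftrightarrow> (\<exists>g\<in>loops M p. C = loop_class M p g)"

definition pi1_mult :: "'a::euclidean_space set \<Rightarrow> 'a \<Rightarrow> (real \<Rightarrow> 'a) set \<Rightarrow> (real \<Rightarrow> 'a) set \<Rightarrow> (real \<Rightarrow> 'a) set" where
  "pi1_mult M p C1 C2 = {h. \<exists>g1\<in>C1. \<exists>g2\<in>C2. h \<in> loop_class M p (g1 +++ g2)}"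

definition class_length :: "(real \<Rightarrow> 'a::euclidean_space) set \<Rightarrow> ereal" where
  "class_length C = (INF g \<in> C. curve_length g 0 1)"

definition irreducible_class :: "'a::euclidean_space set \<Rightarrow> 'a \<Rightarrow> (real \<Rightarrow> 'a) set \<Rightarrow> bool" where
  "irreducible_class M p C \<longleftrightarrow> is_pi1_class M p C \<and> C \<noteq> loop_class M p (linepath p p) \<and>
     (\<forall>C1 C2. is_pi1_class M p C1 \<and> is_pi1_class M p C2 \<and> C = pi1_mult M p C1 C2 \<longrightarrow>
        class_length C1 \<ge> class_length C \<or> class_length C2 \<ge> class_length C)"

end

theory Submission
  imports Defs
begin

(* Let q = c(L/2) and let c1, c2 be the two halves of the loop; by unit speed each has length
   at most L/2. If a path \<sigma> from p to q were shorter than L/2, the loops c1 \<sigma>^-1 and \<sigma> c2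
   would both be shorter than L, while their product is homotopic to c1 c2 and hence lies in C,
   contradicting irreducibility. So the distance from p to q is at least L/2, and each half
   realises it. *)

definition is_partition :: "real \<Rightarrow> real \<Rightarrow> nat \<Rightarrow> (nat \<Rightarrow> real) \<Rightarrow> bool" where
  "is_partition a b n t \<longleftrightarrow> t 0 = a \<and> t n = b \<and> (\<forall>i<n. t i \<le> t (Suc i))"

definition polygon_length :: "(real \<Rightarrow> 'a::euclidean_space) \<Rightarrow> (nat \<Rightarrow> real) \<Rightarrow> nat \<Rightarrow> real" where
  "polygon_length g t n = (\<Sum>i<n. dist (g (t (Suc i))) (g (t i)))"

lemma polygon_length_Suc:
  "polygon_length g t (Suc n) = polygon_length g t n + dist (g (t (Suc n))) (g (t n))"
  by (simp add: polygon_length_def)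

lemma curve_length_eq_SUP_polygon_length:
  "curve_length g a b = (SUP (n, t) \<in> {(n, t). is_partition a b n t}. ereal (polygon_length g t n))"
  unfolding curve_length_def is_partition_def polygon_length_def by (simp add: case_prod_beta)

lemma polygon_length_le_curve_length:
  "is_partition a b n t \<Longrightarrow> ereal (polygon_length g t n) \<le> curve_length g a b"
  unfolding curve_length_eq_SUP_polygon_length by (rule SUP_upper2[where i="(n, t)"]) auto

lemma curve_length_le:
  "(\<And>n t. is_partition a b n t \<Longrightarrow> ereal (polygon_length g t n) \<le> B) \<Longrightarrow> curve_length g a b \<le> B"
  unfolding curve_length_eq_SUP_polygon_length by (rule SUP_least) auto

lemma is_partition_mono:
  assumes "is_partition a b n t" "i \<le> j" "j \<le> n"
  shows "t i \<le> t j"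
proof -
  have "t (min k n) \<le> t (min (Suc k) n)" for k
    using assms(1) by (cases "k < n") (auto simp: is_partition_def min_def)
  then show ?thesis
    using lift_Suc_mono_le[of "\<lambda>k. t (min k n)" i j] assms(2,3) by simp
qed

lemma is_partition_in_interval:
  assumes "is_partition a b n t" "i \<le> n"
  shows "t i \<in> {a..b}"
  using is_partition_mono[OF assms(1), of 0 i] is_partition_mono[OF assms(1), of i n] assms
  by (auto simp: is_partition_def)

lemma dist_le_curve_length:
  assumes "a \<le> b"
  shows "ereal (dist (g b) (g a)) \<le> curve_length g a b"
  using polygon_length_le_curve_length[of a b 1 "\<lambda>i. if i = 0 then a else b" g] assms
  by (simp add: is_partition_def polygon_length_def)

lemma curve_length_nonneg: "a \<le> b \<Longrightarrow> 0 \<le> curve_length g a b"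
  using dist_le_curve_length[of a b g] by (meson order_trans zero_le_dist ereal_less_eq(5))

lemma curve_length_le_lipschitz:
  assumes "a \<le> b" and lip: "\<And>x y. x \<in> {a..b} \<Longrightarrow> y \<in> {a..b} \<Longrightarrow> dist (g x) (g y) \<le> K * \<bar>x - y\<bar>"
  shows "curve_length g a b \<le> ereal (K * (b - a))"
proof (rule curve_length_le)
  fix n t assume t: "is_partition a b n t"
  have "polygon_length g t n \<le> (\<Sum>i<n. K * (t (Suc i) - t i))"
    unfolding polygon_length_def
  proof (rule sum_mono)
    fix i assume "i \<in> {..<n}"
    then have "t i \<in> {a..b}" "t (Suc i) \<in> {a..b}" "t i \<le> t (Suc i)"
      using is_partition_in_interval[OF t] t by (auto simp: is_partition_def)
    then show "dist (g (t (Suc i))) (g (t i)) \<le> K * (t (Suc i) - t i)"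
      using lip[of "t (Suc i)" "t i"] by simp
  qed
  also have "\<dots> = K * (b - a)"
    using t by (simp add: sum_distrib_left[symmetric] sum_lessThan_telescope is_partition_def)
  finally show "ereal (polygon_length g t n) \<le> ereal (K * (b - a))" by simp
qed

lemma curve_length_reparam_mono:
  assumes mono: "mono_on {a..b} \<phi>" and eq: "\<And>s. s \<in> {a..b} \<Longrightarrow> f s = g (\<phi> s)"
  shows "curve_length f a b \<le> curve_length g (\<phi> a) (\<phi> b)"
proof (rule curve_length_le)
  fix n t assume t: "is_partition a b n t"
  have "polygon_length f t n = polygon_length g (\<phi> \<circ> t) n"
    unfolding polygon_length_def using is_partition_in_interval[OF t] by (intro sum.cong) (auto simp: eq)
  also have "ereal \<dots> \<le> curve_length g (\<phi> a) (\<phi> b)"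
    using t is_partition_in_interval[OF t]
    by (intro polygon_length_le_curve_length) (auto simp: is_partition_def intro!: mono_onD[OF mono])
  finally show "ereal (polygon_length f t n) \<le> curve_length g (\<phi> a) (\<phi> b)" .
qed

lemma curve_length_reparam_antimono:
  assumes anti: "antimono_on {a..b} \<phi>" and eq: "\<And>s. s \<in> {a..b} \<Longrightarrow> f s = g (\<phi> s)"
  shows "curve_length f a b \<le> curve_length g (\<phi> b) (\<phi> a)"
proof (rule curve_length_le)
  fix n t assume t: "is_partition a b n t"
  define u where "u i = \<phi> (t (n - i))" for i
  have "polygon_length f t n = (\<Sum>i<n. dist (g (\<phi> (t (n - Suc i)))) (g (\<phi> (t (Suc (n - Suc i))))))"
    unfolding polygon_length_def using is_partition_in_interval[OF t]
    by (subst sum.nat_diff_reindex[symmetric]) (auto simp: eq dist_commute intro!: sum.cong)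
  also have "\<dots> = polygon_length g u n"
    unfolding polygon_length_def by (intro sum.cong) (auto simp: u_def Suc_diff_Suc)
  also have "ereal \<dots> \<le> curve_length g (\<phi> b) (\<phi> a)"
  proof (rule polygon_length_le_curve_length)
    have "u i \<le> u (Suc i)" if "i < n" for i
    proof -
      have "n - i = Suc (n - Suc i)" using that by simp
      then show ?thesis
        using t is_partition_in_interval[OF t, of "n - Suc i"] is_partition_in_interval[OF t, of "n - i"]
        by (auto simp: u_def is_partition_def intro!: monotone_onD[OF anti])
    qed
    then show "is_partition (\<phi> b) (\<phi> a) n u"
      using t by (simp add: is_partition_def u_def)
  qed
  finally show "ereal (polygon_length f t n) \<le> curve_length g (\<phi> b) (\<phi> a)" .
qed

lemma curve_length_extend:
  assumes "a \<le> x" "x \<le> y"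
  shows "curve_length g a x + ereal (dist (g y) (g x)) \<le> curve_length g a y"
proof -
  have "ereal (polygon_length g t n) \<le> curve_length g a y - ereal (dist (g y) (g x))"
    if t: "is_partition a x n t" for n t
  proof -
    have "is_partition a y (Suc n) (t(Suc n := y))"
      using t assms by (auto simp: is_partition_def less_Suc_eq)
    from polygon_length_le_curve_length[OF this, of g] show ?thesis
      using t by (simp add: ereal_le_minus polygon_length_Suc polygon_length_def is_partition_def)
  qed
  then have "curve_length g a x \<le> curve_length g a y - ereal (dist (g y) (g x))"
    by (rule curve_length_le)
  then show ?thesis
    by (simp add: ereal_le_minus)
qed

lemma polygon_length_le_split:
  assumes "is_partition a b n t" "a \<le> m" "m \<le> b"
  shows "ereal (polygon_length g t n) \<le> curve_length g a m + curve_length g m b"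
  using assms
proof (induction n arbitrary: b)
  case 0
  then have "a = b" "m = a"
    by (auto simp: is_partition_def)
  then show ?case
    using curve_length_nonneg[of a a g] by (simp add: polygon_length_def zero_ereal_def[symmetric])
next
  case (Suc n)
  define b' where "b' = t n"
  have t: "is_partition a b' n t"
    using Suc.prems(1) by (simp add: is_partition_def b'_def)
  have "a \<le> b'" "b' \<le> b"
    using is_partition_in_interval[OF Suc.prems(1), of n] by (auto simp: b'_def)
  have step: "polygon_length g t (Suc n) = polygon_length g t n + dist (g b) (g b')"
    using Suc.prems(1) by (simp add: polygon_length_Suc is_partition_def b'_def)
  show ?case
  proof (cases "m \<le> b'")
    case True
    have "ereal (polygon_length g t (Suc n)) \<le>
        curve_length g a m + (curve_length g m b' + ereal (dist (g b) (g b')))"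
      using Suc.IH[OF t Suc.prems(2) True] unfolding step by (metis add.assoc add_right_mono plus_ereal.simps(1))
    also have "\<dots> \<le> curve_length g a m + curve_length g m b"
      using curve_length_extend[OF True \<open>b' \<le> b\<close>] by (rule add_left_mono)
    finally show ?thesis .
  next
    case False
    have "dist (g b) (g b') \<le> dist (g m) (g b') + dist (g b) (g m)"
      by (metis dist_commute dist_triangle)
    then have "ereal (polygon_length g t (Suc n)) \<le>
        (curve_length g a b' + ereal (dist (g m) (g b'))) + ereal (dist (g b) (g m))"
      unfolding step using polygon_length_le_curve_length[OF t, of g]
      by (metis (no_types, lifting) add.assoc add_mono ereal_less_eq(3) plus_ereal.simps(1))
    also have "\<dots> \<le> curve_length g a m + curve_length g m b"
      using False \<open>a \<le> b'\<close> Suc.prems by (intro add_mono curve_length_extend dist_le_curve_length) auto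
    finally show ?thesis .
  qed
qed

lemma curve_length_subadditive:
  "a \<le> m \<Longrightarrow> m \<le> b \<Longrightarrow> curve_length g a b \<le> curve_length g a m + curve_length g m b"
  by (intro curve_length_le polygon_length_le_split)

lemma curve_length_joinpaths_le:
  assumes "pathfinish g1 = pathstart g2"
  shows "curve_length (g1 +++ g2) 0 1 \<le> curve_length g1 0 1 + curve_length g2 0 1"
proof -
  have "curve_length (g1 +++ g2) 0 1 \<le> curve_length (g1 +++ g2) 0 (1/2) + curve_length (g1 +++ g2) (1/2) 1"
    by (rule curve_length_subadditive) auto
  also have "\<dots> \<le> curve_length g1 ((\<lambda>s. 2 * s) 0) ((\<lambda>s. 2 * s) (1/2))
      + curve_length g2 ((\<lambda>s. 2 * s - 1) (1/2)) ((\<lambda>s. 2 * s - 1) 1)"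
    using assms
    by (intro add_mono curve_length_reparam_mono)
      (auto simp: joinpaths_def pathfinish_def pathstart_def mono_on_def mult.commute)
  finally show ?thesis by simp
qed

lemma curve_length_reversepath: "curve_length (reversepath g) 0 1 = curve_length g 0 1"
proof -
  have le: "curve_length (reversepath h) 0 1 \<le> curve_length h 0 1" for h :: "real \<Rightarrow> 'a"
    using curve_length_reparam_antimono[of 0 1 "\<lambda>s. 1 - s" "reversepath h" h]
    by (simp add: reversepath_def monotone_on_def)
  show ?thesis
    using le[of g] le[of "reversepath g"] by simp
qed

lemma linepath_join_midpoint:
  fixes a b :: "'a::real_normed_vector"
  shows "linepath a ((a + b) /\<^sub>R 2) +++ linepath ((a + b) /\<^sub>R 2) b = linepath a b"
proof -
  have "linepath a ((a + b) /\<^sub>R 2) (2 * x) = linepath a b x" for x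
    by (simp add: linepath_def algebra_simps flip: scaleR_2)
  moreover have "linepath ((a + b) /\<^sub>R 2) b (2 * x - 1) = linepath a b x" for x
  proof -
    have "(1 - (2 * x - 1)) * inverse 2 = 1 - x"
      by simp
    then have "linepath ((a + b) /\<^sub>R 2) b (2 * x - 1) = (1 - x) *\<^sub>R (a + b) + (2 * x - 1) *\<^sub>R b"
      by (simp only: linepath_def scaleR_scaleR)
    also have "\<dots> = linepath a b x"
      by (simp add: linepath_def algebra_simps flip: scaleR_2)
    finally show ?thesis .
  qed
  ultimately show ?thesis
    by (simp add: fun_eq_iff joinpaths_def)
qed

lemma compose_joinpaths: "(f \<circ> g1) +++ (f \<circ> g2) = f \<circ> (g1 +++ g2)"
  by (simp add: fun_eq_iff joinpaths_def)

lemma path_image_compose_linepath: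
  "a \<le> b \<Longrightarrow> path_image (c \<circ> linepath a b) = c ` {a..(b::real)}"
  by (simp add: path_image_compose closed_segment_eq_real_ivl)

lemma path_compose_linepath:
  "a \<le> b \<Longrightarrow> continuous_on {a..b} c \<Longrightarrow> path (c \<circ> linepath a (b::real))"
  by (rule path_continuous_image) (simp_all add: closed_segment_eq_real_ivl)

lemma curve_length_compose_linepath_le:
  assumes "a \<le> b"
  shows "curve_length (c \<circ> linepath a b) 0 1 \<le> curve_length c a b"
proof -
  have "linepath a b = (\<lambda>s. a + s * (b - a))"
    by (simp add: fun_eq_iff linepath_def algebra_simps)
  then show ?thesis
    using curve_length_reparam_mono[of 0 1 "linepath a b" "c \<circ> linepath a b" c] assms
    by (simp add: mono_on_def mult_right_mono)
qed

lemma idist_le_curve_length: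
  assumes "a \<le> b" "continuous_on {a..b} c" "c ` {a..b} \<subseteq> M"
  shows "idist M (c a) (c b) \<le> curve_length c a b"
proof -
  have "idist M (c a) (c b) \<le> curve_length (c \<circ> linepath a b) 0 1"
    unfolding idist_def using assms
    by (intro INF_lower) (simp add: path_compose_linepath path_image_compose_linepath pathstart_compose pathfinish_compose)
  also have "\<dots> \<le> curve_length c a b"
    using assms(1) by (rule curve_length_compose_linepath_le)
  finally show ?thesis .
qed

lemma idist_sym: "idist M x y = idist M y x"
proof -
  have le: "idist M y x \<le> idist M x y" for x y
    unfolding idist_def
  proof (rule INF_greatest)
    fix \<gamma> assume "\<gamma> \<in> {\<gamma>. path \<gamma> \<and> path_image \<gamma> \<subseteq> M \<and> pathstart \<gamma> = x \<and> pathfinish \<gamma> = y}"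
    then have rev: "reversepath \<gamma> \<in> {\<gamma>. path \<gamma> \<and> path_image \<gamma> \<subseteq> M \<and> pathstart \<gamma> = y \<and> pathfinish \<gamma> = x}"
      by simp
    show "(INF \<gamma>\<in>{\<gamma>. path \<gamma> \<and> path_image \<gamma> \<subseteq> M \<and> pathstart \<gamma> = y \<and> pathfinish \<gamma> = x}.
        curve_length \<gamma> 0 1) \<le> curve_length \<gamma> 0 1"
      using INF_lower[OF rev, of "\<lambda>\<gamma>. curve_length \<gamma> 0 1"] by (simp add: curve_length_reversepath)
  qed
  show ?thesis
    using le[of x y] le[of y x] by (rule antisym)
qed

lemma unit_speed_on_dist_le:
  assumes "unit_speed_on c a b" "x \<in> {a..b}" "y \<in> {a..b}"
  shows "dist (c x) (c y) \<le> \<bar>x - y\<bar>"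
proof -
  obtain v where v: "\<And>t. t \<in> {a..b} \<Longrightarrow> (c has_vector_derivative v t) (at t within {a..b}) \<and> norm (v t) = 1"
    using assms(1) unfolding unit_speed_on_def by metis
  have "norm (c x - c y) \<le> 1 * norm (x - y)"
  proof (rule differentiable_bound[of "{a..b}" c "\<lambda>t h. h *\<^sub>R v t"])
    show "(c has_derivative (\<lambda>h. h *\<^sub>R v t)) (at t within {a..b})" if "t \<in> {a..b}" for t
      using v[OF that] by (simp add: has_vector_derivative_def)
    show "onorm (\<lambda>h. h *\<^sub>R v t) \<le> 1" if "t \<in> {a..b}" for t
      using v[OF that] onorm_scaleR_left[OF bounded_linear_ident, of "v t"] onorm_id[where 'a=real]
      by simp
  qed (use assms in auto)
  then show ?thesis by (simp add: dist_norm)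
qed

lemma unit_speed_on_curve_length_le:
  assumes "unit_speed_on c a b" "a \<le> a'" "a' \<le> b'" "b' \<le> b"
  shows "curve_length c a' b' \<le> ereal (b' - a')"
  using curve_length_le_lipschitz[of a' b' c 1] unit_speed_on_dist_le[OF assms(1)] assms by simp

lemma geodesic_on_subinterval:
  assumes "geodesic_on M c a b" "a \<le> a'" "a' \<le> b'" "b' \<le> b"
  shows "geodesic_on M c a' b'"
proof -
  have sub: "{a'..b'} \<subseteq> {a..b}" using assms by auto
  obtain D :: "nat \<Rightarrow> real \<Rightarrow> 'a" where D: "\<forall>t\<in>{a..b}. D 0 t = c t"
    "\<forall>k. continuous_on {a..b} (D k)"
    "\<forall>k. \<forall>t\<in>{a..b}. (D k has_vector_derivative D (Suc k) t) (at t within {a..b})"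
    "\<forall>t\<in>{a..b}. \<forall>v\<in>tangent_space M (c t). D 2 t \<bullet> v = 0"
    using assms(1) unfolding geodesic_on_def by blast
  show ?thesis unfolding geodesic_on_def
  proof (intro conjI exI[of _ D])
    show "a' \<le> b'" by fact
    show "\<forall>t\<in>{a'..b'}. D 0 t = c t" using D(1) sub by blast
    show "\<forall>t\<in>{a'..b'}. \<forall>v\<in>tangent_space M (c t). D 2 t \<bullet> v = 0" using D(4) sub by blast
    show "\<forall>t\<in>{a'..b'}. c t \<in> M" using assms(1) sub unfolding geodesic_on_def by blast
    show "\<forall>k. continuous_on {a'..b'} (D k)" using D(2) sub continuous_on_subset by blast
    show "\<forall>k. \<forall>t\<in>{a'..b'}. (D k has_vector_derivative D (Suc k) t) (at t within {a'..b'})"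
      using D(3) sub has_vector_derivative_within_subset by blast
  qed
qed

lemma geodesic_on_continuous:
  assumes "geodesic_on M c a b"
  shows "continuous_on {a..b} c"
proof -
  obtain D :: "nat \<Rightarrow> real \<Rightarrow> 'a" where "\<forall>t\<in>{a..b}. D 0 t = c t" "continuous_on {a..b} (D 0)"
    using assms unfolding geodesic_on_def by blast
  then show ?thesis
    using continuous_on_eq by blast
qed

lemma minimizing_geodesic_onI:
  assumes "geodesic_on M c a b" "curve_length c a b \<le> idist M (c a) (c b)"
  shows "minimizing_geodesic_on M c a b"
proof -
  have "a \<le> b" "c ` {a..b} \<subseteq> M"
    using assms(1) unfolding geodesic_on_def by auto
  then have "idist M (c a) (c b) \<le> curve_length c a b"
    using geodesic_on_continuous[OF assms(1)] by (blast intro: idist_le_curve_length)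
  then show ?thesis
    using assms unfolding minimizing_geodesic_on_def by simp
qed

lemma loop_class_eqI: "homotopic_paths M g h \<Longrightarrow> loop_class M p g = loop_class M p h"
  unfolding loop_class_def by (auto intro: homotopic_paths_trans homotopic_paths_sym)

lemma loop_class_self: "g \<in> loops M p \<Longrightarrow> g \<in> loop_class M p g"
  by (simp add: loop_class_def loops_def)

lemma is_pi1_class_eq_loop_class:
  assumes "is_pi1_class M p C" "g \<in> C"
  shows "C = loop_class M p g"
proof -
  obtain g0 where C: "C = loop_class M p g0"
    using assms(1) unfolding is_pi1_class_def by blast
  then have "homotopic_paths M g0 g"
    using assms(2) by (simp add: loop_class_def)
  then show ?thesis
    unfolding C by (rule loop_class_eqI)
qed

lemma pi1_mult_loop_class:
  assumes "h1 \<in> loops M p" "h2 \<in> loops M p"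
  shows "pi1_mult M p (loop_class M p h1) (loop_class M p h2) = loop_class M p (h1 +++ h2)"
proof (intro set_eqI iffI)
  fix h assume "h \<in> pi1_mult M p (loop_class M p h1) (loop_class M p h2)"
  then obtain k1 k2 where k: "k1 \<in> loop_class M p h1" "k2 \<in> loop_class M p h2"
    "h \<in> loop_class M p (k1 +++ k2)"
    unfolding pi1_mult_def by blast
  have "homotopic_paths M (h1 +++ h2) (k1 +++ k2)"
    using k(1,2) assms by (intro homotopic_paths_join) (auto simp: loop_class_def loops_def)
  then show "h \<in> loop_class M p (h1 +++ h2)"
    using k(3) loop_class_eqI by blast
next
  fix h assume "h \<in> loop_class M p (h1 +++ h2)"
  then show "h \<in> pi1_mult M p (loop_class M p h1) (loop_class M p h2)"
    unfolding pi1_mult_def using assms loop_class_self by blast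
qed

lemma class_length_le: "g \<in> C \<Longrightarrow> class_length C \<le> curve_length g 0 1"
  unfolding class_length_def by (rule INF_lower)

lemma homotopic_paths_join_detour:
  fixes S :: "'a::real_normed_vector set"
  assumes "path g1" "path_image g1 \<subseteq> S" "path g2" "path_image g2 \<subseteq> S"
    and "path \<sigma>" "path_image \<sigma> \<subseteq> S"
    and "pathfinish g1 = pathfinish \<sigma>" "pathstart g2 = pathfinish \<sigma>"
  shows "homotopic_paths S ((g1 +++ reversepath \<sigma>) +++ (\<sigma> +++ g2)) (g1 +++ g2)"
proof -
  have "homotopic_paths S ((g1 +++ reversepath \<sigma>) +++ (\<sigma> +++ g2)) (g1 +++ (reversepath \<sigma> +++ (\<sigma> +++ g2)))"
    using assms by (intro homotopic_paths_sym[OF homotopic_paths_assoc]) (auto simp: subset_path_image_join)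
  also have "homotopic_paths S \<dots> (g1 +++ ((reversepath \<sigma> +++ \<sigma>) +++ g2))"
    using assms by (intro homotopic_paths_join homotopic_paths_assoc) auto
  also have "homotopic_paths S \<dots> (g1 +++ (linepath (pathfinish \<sigma>) (pathfinish \<sigma>) +++ g2))"
    using assms by (intro homotopic_paths_join homotopic_paths_linv) auto
  also have "homotopic_paths S \<dots> (g1 +++ g2)"
    using assms by (intro homotopic_paths_join homotopic_paths_lid') auto
  finally show ?thesis .
qed

lemma irreducible_class_length_le_detour:
  assumes irr: "irreducible_class M p C"
    and g: "g1 +++ g2 \<in> C" "pathfinish g1 = pathstart g2"
    and \<sigma>: "path \<sigma>" "path_image \<sigma> \<subseteq> M" "pathstart \<sigma> = p" "pathfinish \<sigma> = pathfinish g1"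
  shows "class_length C \<le> curve_length \<sigma> 0 1 + max (curve_length g1 0 1) (curve_length g2 0 1)"
proof -
  have C: "is_pi1_class M p C"
    using irr by (simp add: irreducible_class_def)
  then have "g1 +++ g2 \<in> loops M p"
    using g(1) by (auto simp: is_pi1_class_def loop_class_def)
  then have g1: "path g1" "path_image g1 \<subseteq> M" "pathstart g1 = p"
    and g2: "path g2" "path_image g2 \<subseteq> M" "pathfinish g2 = p"
    using g(2) by (auto simp: loops_def path_image_join)
  define h1 h2 where "h1 = g1 +++ reversepath \<sigma>" and "h2 = \<sigma> +++ g2"
  have h: "h1 \<in> loops M p" "h2 \<in> loops M p"
    using g g1 g2 \<sigma> by (auto simp: h1_def h2_def loops_def path_image_join)
  have "C = loop_class M p (g1 +++ g2)"
    using C g(1) by (rule is_pi1_class_eq_loop_class)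
  also have "\<dots> = loop_class M p (h1 +++ h2)"
    unfolding h1_def h2_def using g g1 g2 \<sigma>
    by (intro loop_class_eqI homotopic_paths_sym[OF homotopic_paths_join_detour]) auto
  also have "\<dots> = pi1_mult M p (loop_class M p h1) (loop_class M p h2)"
    using h by (rule pi1_mult_loop_class[symmetric])
  finally have "class_length C \<le> class_length (loop_class M p h1) \<or>
      class_length C \<le> class_length (loop_class M p h2)"
    using irr h unfolding irreducible_class_def is_pi1_class_def by blast
  moreover have "class_length (loop_class M p h1) \<le> curve_length g1 0 1 + curve_length \<sigma> 0 1"
    using class_length_le[OF loop_class_self[OF h(1)]] curve_length_joinpaths_le[of g1 "reversepath \<sigma>"] \<sigma>
    by (simp add: h1_def curve_length_reversepath)
  moreover have "class_length (loop_class M p h2) \<le> curve_length \<sigma> 0 1 + curve_length g2 0 1"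
    using class_length_le[OF loop_class_self[OF h(2)]] curve_length_joinpaths_le[of \<sigma> g2] \<sigma> g(2)
    by (simp add: h2_def)
  ultimately show ?thesis
    by (smt (verit) add.commute add_left_mono max.cobounded1 max.cobounded2 order_trans)
qed

lemma irreducible_class_idist_junction_ge:
  assumes irr: "irreducible_class M p C" and L: "class_length C = ereal L"
    and g: "g1 +++ g2 \<in> C" "pathfinish g1 = pathstart g2"
    and short: "curve_length g1 0 1 \<le> ereal (L/2)" "curve_length g2 0 1 \<le> ereal (L/2)"
  shows "ereal (L/2) \<le> idist M p (pathfinish g1)"
  unfolding idist_def
proof (rule INF_greatest)
  fix \<sigma> assume "\<sigma> \<in> {\<gamma>. path \<gamma> \<and> path_image \<gamma> \<subseteq> M \<and> pathstart \<gamma> = p \<and> pathfinish \<gamma> = pathfinish g1}"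
  then have "ereal L \<le> curve_length \<sigma> 0 1 + max (curve_length g1 0 1) (curve_length g2 0 1)"
    using irreducible_class_length_le_detour[OF irr g] L by simp
  also have "\<dots> \<le> curve_length \<sigma> 0 1 + ereal (L/2)"
    using short by (intro add_left_mono) simp
  finally show "ereal (L/2) \<le> curve_length \<sigma> 0 1"
    by (cases "curve_length \<sigma> 0 1") auto
qed

theorem proposition1:
  fixes M :: "'a::euclidean_space set" and p :: 'a and C :: "(real \<Rightarrow> 'a) set"
    and c :: "real \<Rightarrow> 'a" and L :: real
  assumes "embedded_submanifold M" and "complete_manifold M" and "p \<in> M"
    and "irreducible_class M p C"
    and "ereal L = class_length C"
    and "c 0 = p" and "c L = p" and "geodesic_on M c 0 L" and "unit_speed_on c 0 L"
    and "(\<lambda>s. c (L * s)) \<in> C"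
  shows "minimizing_geodesic_on M c 0 (L / 2) \<and> minimizing_geodesic_on M c (L / 2) L"
proof -
  have "0 \<le> L"
    using assms(8) unfolding geodesic_on_def by auto
  have halves: "curve_length c 0 (L/2) \<le> ereal (L/2)" "curve_length c (L/2) L \<le> ereal (L/2)"
    using unit_speed_on_curve_length_le[OF assms(9), of 0 "L/2"]
      unit_speed_on_curve_length_le[OF assms(9), of "L/2" L] \<open>0 \<le> L\<close> by auto
  define c1 c2 where "c1 = c \<circ> linepath 0 (L/2)" and "c2 = c \<circ> linepath (L/2) L"
  have "c1 +++ c2 = c \<circ> linepath 0 L"
    using linepath_join_midpoint[of 0 L] by (simp add: c1_def c2_def compose_joinpaths)
  then have "c1 +++ c2 \<in> C"
    using assms(10) by (simp add: linepath_def o_def mult.commute)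
  moreover have "curve_length c1 0 1 \<le> ereal (L/2)" "curve_length c2 0 1 \<le> ereal (L/2)"
    using curve_length_compose_linepath_le[of 0 "L/2" c] curve_length_compose_linepath_le[of "L/2" L c]
      halves \<open>0 \<le> L\<close> by (auto simp: c1_def c2_def)
  moreover have "pathfinish c1 = c (L/2)" "pathstart c2 = c (L/2)"
    by (simp_all add: c1_def c2_def pathstart_compose pathfinish_compose)
  ultimately have dist_lower: "ereal (L/2) \<le> idist M p (c (L/2))"
    using irreducible_class_idist_junction_ge[OF assms(4) assms(5)[symmetric], of c1 c2] by simp
  have "curve_length c 0 (L/2) \<le> idist M (c 0) (c (L/2))"
    "curve_length c (L/2) L \<le> idist M (c (L/2)) (c L)"
    using halves dist_lower assms(6,7) idist_sym[of M p] by (auto dest: order_trans)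
  then show ?thesis
    using \<open>0 \<le> L\<close> by (auto intro!: minimizing_geodesic_onI geodesic_on_subinterval[OF assms(8)])
qed

end
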